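(* Let $n\geq 2$ be an integer. Then \[ s^n+s^{-n}+n(s+s^{-1})\equiv(1+s)^4 r_n(s) \pmod 2\] for some integer Laurent polynomial $r_n(s)\in\mathbb{Z}[s,s^{-1}]$ such that $r_n(1)=n/2$ if $n$ is even and $r_n(1)=0$ if $n$ is odd.
   Context: Congruence modulo $2$ of integer Laurent polynomials means equality of their images in $\mathbb{Z}_2[s,s^{-1}]$ (coefficients reduced mod 2). *)

theory Defs
  imports Main "HOL-Library.Poly_Mapping"
begin

text \<open>Integer Laurent polynomials in one variable s: finitely supported maps
  from exponents (int) to coefficients (int), with convolution product.\<close>
type_synonym laurent = "int \<Rightarrow>\<^sub>0 int"

definition lvar :: laurent
  where "lvar = Poly_Mapping.single 1 1"

definition lvar_inv :: laurent
  where "lvar_inv = Poly_Mapping.single (-1) 1"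

text \<open>Evaluation at s = 1: sum of the coefficients.\<close>
definition leval1 :: "laurent \<Rightarrow> int"
  where "leval1 r = (\<Sum>k\<in>Poly_Mapping.keys r. Poly_Mapping.lookup r k)"

definition lcong2 :: "laurent \<Rightarrow> laurent \<Rightarrow> bool"
  where "lcong2 p q \<longleftrightarrow> (\<forall>k. Poly_Mapping.lookup p k mod 2 = Poly_Mapping.lookup q k mod 2)"

end

theory Submission
  imports Defs
begin

text \<open>Work in any commutative ring with an element s and its inverse t. Modulo 2 squaring is
  additive, so (1 + s)^4 is congruent to (1 + s^2)^2 and to 1 + s^4, and (1 + u) times the geometric
  sum of u up to u^(j-1) is congruent to 1 + u^j. For n = 2m the left-hand side is congruent to
  t^(2m) (1 + s^(4m)), which yields the cofactor t^(2m) (1 + s^4 + ... + s^(4(m-1))) with value m at 1.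
  For n = 2k + 1 it is congruent to t^n (1 + s^(2k+2)) (1 + s^(2k)), which factors through
  (1 + s^2)^2 with a cofactor of value k(k+1) at 1; subtracting the even constant k(k+1) from the
  cofactor corrects that value to 0.\<close>

definition cong_mod2 :: "'a::comm_ring_1 \<Rightarrow> 'a \<Rightarrow> bool"
  where "cong_mod2 a b \<longleftrightarrow> 2 dvd (a - b)"

lemma cong_mod2_refl [simp]: "cong_mod2 a a"
  by (simp add: cong_mod2_def)

lemma cong_mod2_sym: "cong_mod2 a b \<Longrightarrow> cong_mod2 b a"
  unfolding cong_mod2_def by (metis dvd_minus_iff minus_diff_eq)

lemma cong_mod2_trans [trans]: "cong_mod2 a b \<Longrightarrow> cong_mod2 b c \<Longrightarrow> cong_mod2 a c"
  unfolding cong_mod2_def by (metis diff_add_cancel add_diff_eq dvd_add)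

lemma cong_mod2_mult:
  assumes "cong_mod2 a b" and "cong_mod2 c d"
  shows "cong_mod2 (a * c) (b * d)"
proof -
  have "a * c - b * d = (a - b) * c + b * (c - d)"
    by (simp add: algebra_simps)
  then show ?thesis
    using assms unfolding cong_mod2_def by simp
qed

lemma cong_mod2_add_double: "cong_mod2 (a + 2 * b) a"
  by (simp add: cong_mod2_def)

lemma cong_mod2_square_add: "cong_mod2 ((a + b) ^ 2) (a ^ 2 + b ^ 2)"
proof -
  have "(a + b) ^ 2 = a ^ 2 + b ^ 2 + 2 * (a * b)"
    by (simp add: power2_sum)
  then show ?thesis
    by (simp only: cong_mod2_add_double)
qed

lemma cong_mod2_one_plus_pow4_square: "cong_mod2 ((1 + s) ^ 4) ((1 + s ^ 2) ^ 2)"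
proof -
  have "(1 + s) ^ 4 = ((1 + s) ^ 2) ^ 2"
    by simp
  also have "cong_mod2 \<dots> ((1 + s ^ 2) ^ 2)"
    using cong_mod2_square_add[of 1 s] by (simp add: power2_eq_square cong_mod2_mult)
  finally show ?thesis .
qed

lemma cong_mod2_one_plus_pow4: "cong_mod2 ((1 + s) ^ 4) (1 + s ^ 4)"
proof -
  note cong_mod2_one_plus_pow4_square
  also have "cong_mod2 ((1 + s ^ 2) ^ 2) (1 + s ^ 4)"
    using cong_mod2_square_add[of 1 "s ^ 2"] by simp
  finally show ?thesis .
qed

lemma cong_mod2_geometric: "cong_mod2 ((1 + u) * (\<Sum>i<j. u ^ i)) (1 + u ^ j)"
proof -
  have "(1 + u) * (\<Sum>i<j. u ^ i) = (1 - u) * (\<Sum>i<j. u ^ i) + 2 * (u * (\<Sum>i<j. u ^ i))"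
    by (simp add: algebra_simps)
  also have "\<dots> = 1 - u ^ j + 2 * (u * (\<Sum>i<j. u ^ i))"
    by (simp only: one_diff_power_eq)
  also have "\<dots> = 1 + u ^ j + 2 * (u * (\<Sum>i<j. u ^ i) - u ^ j)"
    by (simp add: algebra_simps)
  finally show ?thesis
    by (simp only: cong_mod2_add_double)
qed

lemma unit_power_cancel:
  fixes s t :: "'a::comm_ring_1"
  assumes "s * t = 1"
  shows "t ^ a * s ^ (a + b) = s ^ b"
proof -
  have "t ^ a * s ^ (a + b) = (s * t) ^ a * s ^ b"
    by (simp add: power_add power_mult_distrib ac_simps)
  then show ?thesis
    using assms by simp
qed

lemma cong_mod2_even_power_sum:
  fixes s t :: "'a::comm_ring_1"
  assumes st: "s * t = 1"
  shows "cong_mod2 (s ^ (2 * m) + t ^ (2 * m) + of_nat (2 * m) * (s + t))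
                   ((1 + s) ^ 4 * (t ^ (2 * m) * (\<Sum>i<m. (s ^ 4) ^ i)))"
proof -
  have "cong_mod2 (s ^ (2 * m) + t ^ (2 * m) + of_nat (2 * m) * (s + t)) (t ^ (2 * m) + s ^ (2 * m))"
    using cong_mod2_add_double[of "t ^ (2 * m) + s ^ (2 * m)" "of_nat m * (s + t)"]
    by (simp add: algebra_simps)
  also have "t ^ (2 * m) + s ^ (2 * m) = (1 + (s ^ 4) ^ m) * t ^ (2 * m)"
    using unit_power_cancel[OF st, of "2 * m" "2 * m"]
    by (simp add: algebra_simps flip: power_mult)
  also have "cong_mod2 \<dots> ((1 + s ^ 4) * (\<Sum>i<m. (s ^ 4) ^ i) * t ^ (2 * m))"
    by (intro cong_mod2_mult cong_mod2_sym[OF cong_mod2_geometric] cong_mod2_refl)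
  also have "cong_mod2 \<dots> ((1 + s) ^ 4 * (\<Sum>i<m. (s ^ 4) ^ i) * t ^ (2 * m))"
    by (intro cong_mod2_mult cong_mod2_sym[OF cong_mod2_one_plus_pow4] cong_mod2_refl)
  finally show ?thesis
    by (simp add: ac_simps)
qed

lemma cong_mod2_odd_power_sum:
  fixes s t :: "'a::comm_ring_1" and k :: nat
  assumes st: "s * t = 1"
  defines "A \<equiv> \<Sum>i<k + 1. (s ^ 2) ^ i" and "B \<equiv> \<Sum>i<k. (s ^ 2) ^ i"
  shows "cong_mod2 (s ^ (2 * k + 1) + t ^ (2 * k + 1) + of_nat (2 * k + 1) * (s + t))
                   ((1 + s) ^ 4 * (t ^ (2 * k + 1) * A * B - of_nat (k * (k + 1))))"
proof -
  let ?n = "2 * k + 1"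
  have "cong_mod2 (s ^ ?n + t ^ ?n + of_nat ?n * (s + t)) (t ^ ?n + t + s + s ^ ?n)"
    using cong_mod2_add_double[of "t ^ ?n + t + s + s ^ ?n" "of_nat k * (s + t)"]
    by (simp add: algebra_simps)
  also have "t ^ ?n + t + s + s ^ ?n = (1 + (s ^ 2) ^ (k + 1)) * (1 + (s ^ 2) ^ k) * t ^ ?n"
  proof -
    have "t ^ ?n * s ^ (2 * k) = t"
      using unit_power_cancel[of t s "2 * k" 1] st by (simp add: ac_simps)
    moreover have "t ^ ?n * s ^ (2 * k + 2) = s"
      using unit_power_cancel[OF st, of ?n 1] by simp
    moreover have "t ^ ?n * s ^ (?n + ?n) = s ^ ?n"
      using unit_power_cancel[OF st, of ?n ?n] .
    ultimately show ?thesis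
      by (simp add: algebra_simps flip: power_mult power_add)
  qed
  also have "cong_mod2 \<dots> (((1 + s ^ 2) * A) * ((1 + s ^ 2) * B) * t ^ ?n)"
    unfolding A_def B_def
    by (intro cong_mod2_mult cong_mod2_sym[OF cong_mod2_geometric] cong_mod2_refl)
  also have "\<dots> = (1 + s ^ 2) ^ 2 * (t ^ ?n * A * B)"
    by (simp add: power2_eq_square ac_simps)
  also have "cong_mod2 \<dots> ((1 + s) ^ 4 * (t ^ ?n * A * B))"
    by (intro cong_mod2_mult cong_mod2_sym[OF cong_mod2_one_plus_pow4_square] cong_mod2_refl)
  also have "cong_mod2 \<dots> ((1 + s) ^ 4 * (t ^ ?n * A * B - of_nat (k * (k + 1))))"
  proof -
    obtain c where "k * (k + 1) = 2 * c"
      by (metis evenE even_mult_iff odd_even_add odd_one)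
    then show ?thesis
      using cong_mod2_add_double[of "(1 + s) ^ 4 * (t ^ ?n * A * B - of_nat (k * (k + 1)))"
                                    "(1 + s) ^ 4 * of_nat c"]
      by (auto intro: cong_mod2_sym simp: algebra_simps)
  qed
  finally show ?thesis .
qed

lemma lcong2_if_cong_mod2:
  assumes "cong_mod2 p q"
  shows "lcong2 p q"
proof -
  obtain w where "p - q = 2 * w"
    using assms unfolding cong_mod2_def by blast
  then have "Poly_Mapping.lookup p k = Poly_Mapping.lookup q k + 2 * Poly_Mapping.lookup w k" for k
    by (metis diff_add_cancel add.commute lookup_add mult_2)
  then show ?thesis
    unfolding lcong2_def by simp
qed

lemma leval1_add: "leval1 (p + q) = leval1 p + leval1 q"
  unfolding leval1_def by (rule setsum_keys_plus_distrib) simp_all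

lemma leval1_diff: "leval1 (p - q) = leval1 p - leval1 q"
  using leval1_add[of "p - q" q] by simp

lemma leval1_sum: "leval1 (\<Sum>i\<in>I. f i) = (\<Sum>i\<in>I. leval1 (f i))"
proof (induction I rule: infinite_finite_induct)
  case (insert i I)
  then show ?case by (simp add: leval1_add)
qed (simp_all add: leval1_def)

lemma leval1_single: "leval1 (Poly_Mapping.single k c) = c"
  unfolding leval1_def by (cases "c = 0") auto

lemma leval1_of_nat: "leval1 (of_nat m) = int m"
  by (metis leval1_single single_of_nat of_nat_id)

lemma single_one_power: "Poly_Mapping.single k (1::int) ^ a = Poly_Mapping.single (int a * k) 1"
  by (induction a) (simp_all add: mult_single algebra_simps)

lemma lvar_mult_lvar_inv: "lvar * lvar_inv = 1"
  unfolding lvar_def lvar_inv_def by (simp add: mult_single)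

theorem lemma3p12:
  fixes n :: nat
  assumes "n \<ge> 2"
  shows "\<exists>r :: laurent.
           lcong2 (lvar ^ n + lvar_inv ^ n + of_nat n * (lvar + lvar_inv)) ((1 + lvar) ^ 4 * r)
         \<and> (if even n then 2 * leval1 r = int n else leval1 r = 0)"
proof (cases "even n")
  case True
  then obtain m where n: "n = 2 * m" by blast
  define r where "r = lvar_inv ^ (2 * m) * (\<Sum>i<m. (lvar ^ 4) ^ i)"
  have "leval1 r = int m"
    by (simp add: r_def sum_distrib_left leval1_sum lvar_def lvar_inv_def single_one_power mult_single
                  leval1_single)
  moreover have "lcong2 (lvar ^ n + lvar_inv ^ n + of_nat n * (lvar + lvar_inv)) ((1 + lvar) ^ 4 * r)"
    unfolding n r_def by (intro lcong2_if_cong_mod2 cong_mod2_even_power_sum lvar_mult_lvar_inv)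
  ultimately show ?thesis
    using True n by auto
next
  case False
  then obtain k where n: "n = 2 * k + 1" using oddE by blast
  define r where "r = lvar_inv ^ n * (\<Sum>i<k + 1. (lvar ^ 2) ^ i) * (\<Sum>i<k. (lvar ^ 2) ^ i)
                      - of_nat (k * (k + 1))"
  have "leval1 (lvar_inv ^ n * (\<Sum>i<k + 1. (lvar ^ 2) ^ i) * (\<Sum>i<k. (lvar ^ 2) ^ i))
      = (\<Sum>j<k. \<Sum>i<k + 1. leval1 (lvar_inv ^ n * (lvar ^ 2) ^ i * (lvar ^ 2) ^ j))"
    by (simp only: sum_distrib_left sum_distrib_right leval1_sum)
  also have "\<dots> = int (k * (k + 1))"
    by (simp add: lvar_def lvar_inv_def single_one_power mult_single leval1_single algebra_simps)
  finally have "leval1 r = 0"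
    unfolding r_def leval1_diff leval1_of_nat by simp
  moreover have "lcong2 (lvar ^ n + lvar_inv ^ n + of_nat n * (lvar + lvar_inv)) ((1 + lvar) ^ 4 * r)"
    unfolding n r_def by (intro lcong2_if_cong_mod2 cong_mod2_odd_power_sum lvar_mult_lvar_inv)
  ultimately show ?thesis
    using False by auto
qed

end
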